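(* For $m=1,2,3,\ldots$ define $$P_m=\prod_{n=1}^{\infty}\left(\prod_{k=0}^{n}(k+1)^{(-1)^{k+1}\binom{n}{k}}\right)^{\left(\frac{m}{m+1}\right)^n}.$$ Then the product converges, and $$\gamma(-m)=\frac{1}{m}\log\frac{m+1}{P_m}.$$
   Context: $\gamma(z)$ is the generalized-Euler-constant function: for $|z|\le1$, $\gamma(z)=\sum_{n=1}^{\infty} z^{n-1}\left(\frac{1}{n}-\log\frac{n+1}{n}\right)$, and for $z\in\mathbb{C}\setminus[1,\infty)$ (in particular for negative real $z$) it denotes the analytic continuation $\gamma(z)=\int_0^1\frac{1-x+\log x}{(1-xz)\log x}\,dx$. *)

theory Defs
  imports "HOL-Analysis.Analysis"
begin

text \<open>Analytic continuation of the generalized Euler constant function,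
  gamma(z) = integral from 0 to 1 of (1 - x + log x) / ((1 - x z) log x) dx,
  valid for z in the complex plane minus [1, infinity).\<close>
definition gen_euler_gamma :: "complex \<Rightarrow> complex" where
  "gen_euler_gamma z = integral {0..1}
     (\<lambda>x::real. complex_of_real (1 - x + ln x) / ((1 - complex_of_real x * z) * complex_of_real (ln x)))"

definition P_factor :: "nat \<Rightarrow> nat \<Rightarrow> real" where
  "P_factor m n = (\<Prod>k=0..n. (real k + 1) powr ((-1) ^ (k + 1) * real (n choose k)))
                    powr ((real m / (real m + 1)) ^ n)"

end

theory Submission
  imports Defs "HOL-Real_Asymp.Real_Asymp"
begin

text \<open>Taking logarithms, the n-th factor of P_m is exp (q^n A_n) with q = m / (m + 1) and
  A_n = sum_k (-1)^(k+1) (n choose k) ln (k + 1). The classical integral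
  int_0^1 (x^k - 1) / ln x dx = ln (k + 1) and the binomial theorem give
  A_(n+1) = int_0^1 (1 - x)^n L(x) dx, where L(x) = (x - 1) / ln x is the logarithmic mean of x
  and 1. Summing the geometric series under the integral (dominated convergence) yields
  sum_(n>=1) q^n A_n = m int_0^1 L(x) / (1 + m x) dx, so the product converges to the exponential
  of this value. Splitting the integrand of gamma(-m) in the same way gives
  gamma(-m) = ln (m + 1) / m - int_0^1 L(x) / (1 + m x) dx.\<close>

text \<open>Since \<open>ln 0 = 0\<close>
  in Isabelle, \<open>log_mean 0 = 0\<close>, which is also its limit at \<open>0\<close>.\<close>
definition log_mean :: "real \<Rightarrow> real" where
  "log_mean x = (if x = 1 then 1 else (x - 1) / ln x)"

lemma log_mean_nonneg:
  assumes "0 \<le> x"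
  shows "0 \<le> log_mean x"
proof (cases "x < 1")
  case True
  moreover have "ln x \<le> 0"
    using True assms by (cases "x = 0") auto
  ultimately show ?thesis
    by (simp add: log_mean_def divide_nonpos_nonpos)
next
  case False
  then show ?thesis by (auto simp: log_mean_def)
qed

lemma continuous_on_log_mean: "continuous_on {0..} log_mean"
  unfolding continuous_on_eq_continuous_within
proof (intro ballI)
  fix x :: real
  assume "x \<in> {0..}"
  then consider "x = 0" | "x = 1" | "0 < x" "x \<noteq> 1"
    by fastforce
  then show "continuous (at x within {0..}) log_mean"
  proof cases
    case 1
    have "((\<lambda>y::real. (y - 1) / ln y) \<longlongrightarrow> 0) (at_right 0)"
      by real_asymp
    moreover have "eventually (\<lambda>y. (y - 1) / ln y = log_mean y) (at_right (0::real))"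
      by (rule eventually_at_right_real[of 0 1, THEN eventually_mono]) (auto simp: log_mean_def)
    ultimately have "(log_mean \<longlongrightarrow> 0) (at_right 0)"
      by (rule Lim_transform_eventually)
    then show ?thesis
      using 1 by (simp add: continuous_within at_within_Ici_at_right log_mean_def)
  next
    case 2
    have "((\<lambda>y::real. (y - 1) / ln y) \<longlongrightarrow> 1) (at 1)"
      by real_asymp
    moreover have "eventually (\<lambda>y. (y - 1) / ln y = log_mean y) (at (1::real))"
      by (auto simp: log_mean_def eventually_at_filter)
    ultimately have "(log_mean \<longlongrightarrow> 1) (at 1)"
      by (rule Lim_transform_eventually)
    then have "isCont log_mean 1"
      by (simp add: isCont_def log_mean_def)
    then show ?thesis
      unfolding 2 by (rule continuous_at_imp_continuous_at_within)
  next
    case 3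
    have "eventually (\<lambda>y. (y - 1) / ln y = log_mean y) (nhds x)"
      using eventually_nhds_in_open[of "-{1}" x] 3 by (auto elim!: eventually_mono simp: log_mean_def)
    moreover have "isCont (\<lambda>y. (y - 1) / ln y) x"
      unfolding isCont_def by (intro tendsto_intros) (use 3 in auto)
    ultimately have "isCont log_mean x"
      by (simp add: isCont_cong)
    then show ?thesis
      by (rule continuous_at_imp_continuous_at_within)
  qed
qed

lemma has_integral_powr_exponent:
  fixes x a b :: real
  assumes "0 < x" "x \<noteq> 1" "a \<le> b"
  shows "((\<lambda>t. x powr t) has_integral (x powr b - x powr a) / ln x) {a..b}"
proof -
  have "((\<lambda>t. x powr t) has_integral (x powr b / ln x - x powr a / ln x)) {a..b}"
  proof (rule fundamental_theorem_of_calculus)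
    fix t assume "t \<in> {a..b}"
    have "((\<lambda>t. exp (t * ln x) / ln x) has_real_derivative exp (t * ln x) * ln x / ln x) (at t within {a..b})"
      by (auto intro!: derivative_eq_intros)
    then show "((\<lambda>t. x powr t / ln x) has_vector_derivative x powr t) (at t within {a..b})"
      using assms by (simp add: powr_def has_real_derivative_iff_has_vector_derivative)
  qed (use assms in auto)
  then show ?thesis
    by (simp add: diff_divide_distrib)
qed

lemma has_integral_inverse_succ:
  fixes a b :: real
  assumes "-1 < a" "a \<le> b"
  shows "((\<lambda>t. 1 / (t + 1)) has_integral ln ((b + 1) / (a + 1))) {a..b}"
proof -
  have "((\<lambda>t. 1 / (t + 1)) has_integral ln (b + 1) - ln (a + 1)) {a..b}"
  proof (rule fundamental_theorem_of_calculus)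
    fix t assume "t \<in> {a..b}"
    then show "((\<lambda>t. ln (t + 1)) has_vector_derivative 1 / (t + 1)) (at t within {a..b})"
      using assms
      by (auto intro!: derivative_eq_intros simp flip: has_real_derivative_iff_has_vector_derivative)
  qed (use assms in auto)
  then show ?thesis
    using assms by (simp add: ln_div)
qed

text \<open>Write the integrand as the integral of \<open>x powr t\<close> over \<open>t \<in> {a..b}\<close> and swap the order
  of integration; \<open>0 < a\<close> keeps \<open>x powr t\<close> continuous at \<open>x = 0\<close>.\<close>
lemma has_integral_powr_diff_div_ln:
  fixes a b :: real
  assumes "0 < a" "a \<le> b"
  shows "((\<lambda>x. (x powr b - x powr a) / ln x) has_integral ln ((b + 1) / (a + 1))) {0..1}"
proof -
  have cont: "continuous_on (cbox (0, a) (1, b)) (\<lambda>(x, t). x powr t)"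
  proof -
    have "continuous_on (cbox (0, a) (1, b)) (\<lambda>z. fst z powr snd z)"
      using assms by (intro continuous_on_powr' continuous_intros) (auto simp: cbox_Pair_eq)
    then show ?thesis
      by (simp add: case_prod_beta)
  qed
  define F where "F x = integral {a..b} (\<lambda>t. x powr t)" for x
  have "continuous_on ({0..1} \<times> cbox a b) (\<lambda>(x, t). x powr t)"
    using cont by (simp add: cbox_Pair_eq)
  from integral_continuous_on_param[OF this] have F_cont: "continuous_on {0..1} F"
    by (simp add: F_def)
  have "integral {0..1} F = integral {a..b} (\<lambda>t. integral {0..1} (\<lambda>x. x powr t))"
    unfolding F_def using integral_swap_continuous[OF cont] by simp
  also have "\<dots> = integral {a..b} (\<lambda>t. 1 / (t + 1))"
    using assms has_integral_powr_from_0[of _ 1]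
    by (intro integral_cong integral_unique) auto
  also have "\<dots> = ln ((b + 1) / (a + 1))"
    using assms has_integral_inverse_succ by (intro integral_unique) auto
  finally have "(F has_integral ln ((b + 1) / (a + 1))) {0..1}"
    using F_cont by (metis integrable_integral integrable_continuous_real)
  then show ?thesis
  proof (rule has_integral_spike_finite[rotated 2])
    fix x :: real assume "x \<in> {0..1} - {0, 1}"
    then show "(x powr b - x powr a) / ln x = F x"
      unfolding F_def using assms has_integral_powr_exponent
      by (intro integral_unique [symmetric]) auto
  qed auto
qed

text \<open>The substitution \<open>x = y\<^sup>2\<close> turns \<open>log_mean\<close> into the integrand above with exponents
  3 and 1.\<close>
lemma has_integral_log_mean: "(log_mean has_integral ln 2) {0..1}"
proof -
  have cont: "continuous_on {0..1} log_mean"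
    using continuous_on_log_mean by (rule continuous_on_subset) auto
  have "((\<lambda>y. (2 * y) *\<^sub>R log_mean (y ^ 2)) has_integral integral {0 ^ 2..1 ^ 2} log_mean) {0..1}"
    by (rule has_integral_substitution[OF _ _ _ cont])
      (auto intro!: derivative_eq_intros simp: power_le_one)
  then have substituted: "((\<lambda>y. (2 * y) *\<^sub>R log_mean (y ^ 2)) has_integral integral {0..1} log_mean) {0..1}"
    by simp
  have "((\<lambda>y::real. (y powr 3 - y powr 1) / ln y) has_integral ln ((3 + 1) / (1 + 1))) {0..1}"
    by (rule has_integral_powr_diff_div_ln) simp_all
  moreover have "ln ((3 + 1) / (1 + 1)) = (ln 2 :: real)"
    by simp
  ultimately have "((\<lambda>y::real. (y powr 3 - y powr 1) / ln y) has_integral ln 2) {0..1}"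
    by (simp only:)
  then have "((\<lambda>y. (2 * y) *\<^sub>R log_mean (y ^ 2)) has_integral ln 2) {0..1}"
  proof (rule has_integral_spike_finite[rotated 2, where S = "{0, 1}"])
    fix y :: real assume "y \<in> {0..1} - {0, 1}"
    then have y: "0 < y" "y < 1" by auto
    then have "y ^ 2 \<noteq> 1" "ln (y ^ 2) = 2 * ln y" "ln y \<noteq> 0"
      by (simp_all add: power2_eq_1_iff ln_realpow)
    then have "(2 * y) *\<^sub>R log_mean (y ^ 2) = (y * y ^ 2 - y) / ln y"
      by (simp add: log_mean_def field_simps)
    also have "\<dots> = (y powr 3 - y powr 1) / ln y"
      using y by (simp add: powr_numeral power3_eq_cube power2_eq_square)
    finally show "(2 * y) *\<^sub>R log_mean (y ^ 2) = (y powr 3 - y powr 1) / ln y" .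
  qed auto
  with substituted have "integral {0..1} log_mean = ln 2"
    by (rule has_integral_unique)
  with cont show ?thesis
    using integrable_integral integrable_continuous_real by metis
qed

lemma has_integral_pow_minus_one_div_ln:
  "((\<lambda>x. (x ^ k - 1) / ln x) has_integral ln (real k + 1)) {0..1}"
proof (cases "k = 0")
  case False
  have "((\<lambda>x. (x powr real k - x powr 1) / ln x + log_mean x) has_integral
      ln ((real k + 1) / 2) + ln 2) {0..1}"
    using has_integral_add[OF has_integral_powr_diff_div_ln[of 1 "real k"] has_integral_log_mean] False
    by simp
  then have "((\<lambda>x. (x powr real k - x powr 1) / ln x + log_mean x) has_integral ln (real k + 1)) {0..1}"
    by (simp add: ln_div)
  then show ?thesis
  proof (rule has_integral_spike_finite[rotated 2])
    fix x :: real assume "x \<in> {0..1} - {0, 1}"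
    then show "(x ^ k - 1) / ln x = (x powr real k - x powr 1) / ln x + log_mean x"
      by (simp add: log_mean_def powr_realpow diff_divide_distrib)
  qed auto
qed simp

lemma alternating_binomial_sum_pow_minus_one:
  fixes x :: "'a::comm_ring_1"
  assumes "0 < n"
  shows "(\<Sum>k\<le>n. (-1) ^ (k + 1) * of_nat (n choose k) * (x ^ k - 1)) = - ((1 - x) ^ n)"
proof -
  have "(-1) ^ (k + 1) * of_nat (n choose k) * (x ^ k - 1) =
      (-1) ^ k * of_nat (n choose k) - of_nat (n choose k) * (- x) ^ k" for k
  proof -
    have "(- x) ^ k = (-1) ^ k * x ^ k"
      by (rule power_minus)
    then show ?thesis
      by (simp add: algebra_simps)
  qed
  then have "(\<Sum>k\<le>n. (-1) ^ (k + 1) * of_nat (n choose k) * (x ^ k - 1)) =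
      (\<Sum>k\<le>n. (-1) ^ k * of_nat (n choose k)) - (\<Sum>k\<le>n. of_nat (n choose k) * (- x) ^ k)"
    by (simp only: sum_subtractf)
  also have "\<dots> = - ((1 - x) ^ n)"
    using choose_alternating_sum[OF assms] binomial_ring[of "- x" 1 n] by simp
  finally show ?thesis .
qed

definition binom_ln_sum :: "nat \<Rightarrow> real" where
  "binom_ln_sum n = (\<Sum>k=0..n. (-1) ^ (k + 1) * real (n choose k) * ln (real k + 1))"

lemma P_factor_eq_exp: "P_factor m n = exp ((real m / (real m + 1)) ^ n * binom_ln_sum n)"
proof -
  have "(\<Prod>k=0..n. (real k + 1) powr ((-1) ^ (k + 1) * real (n choose k))) = exp (binom_ln_sum n)"
    by (simp add: binom_ln_sum_def exp_sum powr_def mult_ac)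
  then show ?thesis
    by (simp add: P_factor_def powr_def)
qed

lemma has_integral_binom_ln_sum:
  "((\<lambda>x. (1 - x) ^ n * log_mean x) has_integral binom_ln_sum (Suc n)) {0..1}"
proof -
  have "((\<lambda>x. \<Sum>k\<le>Suc n. (-1) ^ (k + 1) * real (Suc n choose k) * ((x ^ k - 1) / ln x))
      has_integral binom_ln_sum (Suc n)) {0..1}"
    unfolding binom_ln_sum_def atLeast0AtMost
    by (intro has_integral_sum finite_atMost has_integral_mult_right has_integral_pow_minus_one_div_ln)
  then show ?thesis
  proof (rule has_integral_spike_finite[rotated 2])
    fix x :: real assume "x \<in> {0..1} - {1}"
    then have "(1 - x) ^ n * log_mean x = - ((1 - x) ^ Suc n) / ln x"
      by (simp add: log_mean_def field_simps)
    also have "\<dots> = (\<Sum>k\<le>Suc n. (-1) ^ (k + 1) * real (Suc n choose k) * (x ^ k - 1)) / ln x"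
      by (subst alternating_binomial_sum_pow_minus_one) simp_all
    finally show "(1 - x) ^ n * log_mean x =
        (\<Sum>k\<le>Suc n. (-1) ^ (k + 1) * real (Suc n choose k) * ((x ^ k - 1) / ln x))"
      by (simp only: sum_divide_distrib times_divide_eq_right)
  qed auto
qed

lemma sums_binom_ln_sum:
  fixes r :: real
  assumes "0 \<le> r" "r < 1"
  shows "(\<lambda>n. r ^ Suc n * binom_ln_sum (Suc n)) sums
    integral {0..1} (\<lambda>x. r * log_mean x / (1 - r * (1 - x)))"
proof -
  define h where "h x = r * log_mean x / (1 - r * (1 - x))" for x
  define f where "f N x = (\<Sum>n<N. r ^ Suc n * ((1 - x) ^ n * log_mean x))" for N x
  have series: "(\<lambda>n. r ^ Suc n * ((1 - x) ^ n * log_mean x)) sums h x" if "x \<in> {0..1}" for x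
  proof -
    have "\<bar>r * (1 - x)\<bar> < 1"
      using assms that mult_left_le[of "1 - x" r] by auto
    then have "(\<lambda>n. r * log_mean x * (r * (1 - x)) ^ n) sums (r * log_mean x * (1 / (1 - r * (1 - x))))"
      by (intro sums_mult geometric_sums) simp
    then show ?thesis
      by (simp add: h_def power_mult_distrib mult_ac)
  qed
  have terms_nonneg: "0 \<le> r ^ Suc n * ((1 - x) ^ n * log_mean x)" if "x \<in> {0..1}" for n x
    using assms that log_mean_nonneg by simp
  have partial_sums: "(f N has_integral (\<Sum>n<N. r ^ Suc n * binom_ln_sum (Suc n))) {0..1}" for N
    unfolding f_def
    by (intro has_integral_sum finite_lessThan has_integral_mult_right has_integral_binom_ln_sum)
  have "(\<lambda>N. integral {0..1} (f N)) \<longlonglongrightarrow> integral {0..1} h"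
  proof (rule dominated_convergence(2))
    show "f N integrable_on {0..1}" for N
      using partial_sums by blast
    have "continuous_on {0..1} log_mean"
      using continuous_on_log_mean by (rule continuous_on_subset) auto
    moreover have "1 - r * (1 - x) \<noteq> 0" if "x \<in> {0..1}" for x
      using assms that mult_left_le[of "1 - x" r] by auto
    ultimately show "h integrable_on {0..1}"
      unfolding h_def by (intro integrable_continuous_real continuous_intros) auto
    show "norm (f N x) \<le> h x" if "x \<in> {0..1}" for N x
      using sum_le_suminf[OF sums_summable[OF series[OF that]], of "{..<N}"]
        sums_unique[OF series[OF that]] terms_nonneg[OF that]
      by (simp add: f_def sum_nonneg)
    show "(\<lambda>N. f N x) \<longlonglongrightarrow> h x" if "x \<in> {0..1}" for x
      using series[OF that] by (simp add: f_def sums_def)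
  qed
  moreover have "integral {0..1} (f N) = (\<Sum>n<N. r ^ Suc n * binom_ln_sum (Suc n))" for N
    using partial_sums by (rule integral_unique)
  ultimately show ?thesis
    unfolding sums_def h_def [abs_def] by simp
qed

lemma has_prod_P_factor:
  "(\<lambda>n. P_factor m (Suc n)) has_prod exp (real m * integral {0..1} (\<lambda>x. log_mean x / (1 + real m * x)))"
proof -
  define r where "r = real m / (real m + 1)"
  have "r * log_mean x / (1 - r * (1 - x)) = real m * (log_mean x / (1 + real m * x))" for x
  proof -
    have "1 - r * (1 - x) = (1 + real m * x) / (real m + 1)"
      by (simp add: r_def field_simps)
    moreover have "r * (real m + 1) = real m"
      by (simp add: r_def)
    ultimately show ?thesis
      by (simp add: mult.commute mult.left_commute)
  qed
  then have "integral {0..1} (\<lambda>x. r * log_mean x / (1 - r * (1 - x))) =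
      real m * integral {0..1} (\<lambda>x. log_mean x / (1 + real m * x))"
    by (simp only: integral_mult_right)
  moreover have "(\<lambda>n. r ^ Suc n * binom_ln_sum (Suc n)) sums
      integral {0..1} (\<lambda>x. r * log_mean x / (1 - r * (1 - x)))"
    by (rule sums_binom_ln_sum) (simp_all add: r_def)
  ultimately have "(\<lambda>n. exp (r ^ Suc n * binom_ln_sum (Suc n))) has_prod
      exp (real m * integral {0..1} (\<lambda>x. log_mean x / (1 + real m * x)))"
    unfolding has_prod_def using sums_imp_has_prod_exp by simp
  then show ?thesis
    unfolding P_factor_eq_exp r_def .
qed

lemma one_plus_mult_pos:
  fixes s x :: real
  assumes "-1 < s" "x \<in> {0..1}"
  shows "0 < 1 + s * x"
proof (cases "0 \<le> s")
  case True
  then show ?thesis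
    using assms by (simp add: add_pos_nonneg)
next
  case False
  then have "s \<le> s * x"
    using mult_left_mono_neg[of x 1 s] assms by auto
  then show ?thesis
    using assms by linarith
qed

lemma has_integral_inverse_affine:
  fixes s :: real
  assumes "-1 < s" "s \<noteq> 0"
  shows "((\<lambda>x. 1 / (1 + s * x)) has_integral ln (1 + s) / s) {0..1}"
proof -
  have "((\<lambda>x. 1 / (1 + s * x)) has_integral ln (1 + s * 1) / s - ln (1 + s * 0) / s) {0..1}"
  proof (rule fundamental_theorem_of_calculus)
    fix x :: real assume "x \<in> {0..1}"
    then have "0 < 1 + s * x"
      using assms one_plus_mult_pos by blast
    then show "((\<lambda>x. ln (1 + s * x) / s) has_vector_derivative 1 / (1 + s * x)) (at x within {0..1})"
      using assms
      by (auto intro!: derivative_eq_intros simp flip: has_real_derivative_iff_has_vector_derivative)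
  qed simp
  then show ?thesis
    by simp
qed

lemma gen_euler_gamma_neg_real:
  fixes s :: real
  assumes "-1 < s" "s \<noteq> 0"
  shows "gen_euler_gamma (- of_real s) =
    of_real (ln (1 + s) / s - integral {0..1} (\<lambda>x. log_mean x / (1 + s * x)))"
proof -
  have "continuous_on {0..1} (\<lambda>x. log_mean x / (1 + s * x))"
    using continuous_on_subset[OF continuous_on_log_mean] one_plus_mult_pos[OF assms(1)]
    by (intro continuous_intros) force+
  then have "((\<lambda>x. 1 / (1 + s * x) - log_mean x / (1 + s * x)) has_integral
      ln (1 + s) / s - integral {0..1} (\<lambda>x. log_mean x / (1 + s * x))) {0..1}"
    using assms
    by (intro has_integral_diff has_integral_inverse_affine integrable_integral integrable_continuous_real)
  then have "((\<lambda>x. complex_of_real (1 / (1 + s * x) - log_mean x / (1 + s * x))) has_integral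
      of_real (ln (1 + s) / s - integral {0..1} (\<lambda>x. log_mean x / (1 + s * x)))) {0..1}"
    by (rule has_integral_of_real)
  then have "((\<lambda>x. complex_of_real (1 - x + ln x) /
        ((1 - complex_of_real x * - of_real s) * complex_of_real (ln x))) has_integral
      of_real (ln (1 + s) / s - integral {0..1} (\<lambda>x. log_mean x / (1 + s * x)))) {0..1}"
  proof (rule has_integral_spike_finite[rotated 2])
    fix x :: real assume "x \<in> {0..1} - {0, 1}"
    then have x: "0 < x" "x < 1" and "1 + s * x \<noteq> 0"
      using one_plus_mult_pos[OF assms(1), of x] by auto
    moreover have "ln x \<noteq> 0"
      using x by simp
    ultimately have "(1 - x + ln x) / ((1 + s * x) * ln x) = (1 - (x - 1) / ln x) / (1 + s * x)"
      by (simp add: field_simps)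
    then have "(1 - x + ln x) / ((1 + s * x) * ln x) = 1 / (1 + s * x) - log_mean x / (1 + s * x)"
      using x by (simp add: log_mean_def diff_divide_distrib)
    moreover have "1 - complex_of_real x * - of_real s = of_real (1 + s * x)"
      by (simp add: mult.commute)
    ultimately show "complex_of_real (1 - x + ln x) /
        ((1 - complex_of_real x * - of_real s) * complex_of_real (ln x)) = of_real (1 / (1 + s * x) - log_mean x / (1 + s * x))"
      by (metis of_real_divide of_real_mult)
  qed auto
  then show ?thesis
    unfolding gen_euler_gamma_def by (rule integral_unique)
qed

theorem corollary10:
  fixes m :: nat
  assumes "m \<ge> 1"
  shows "convergent_prod (\<lambda>n. P_factor m (Suc n)) \<and>
         gen_euler_gamma (- of_nat m) =
           complex_of_real ((1 / real m) * ln ((real m + 1) / (\<Prod>n. P_factor m (Suc n))))"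
proof -
  define I where "I = integral {0..1} (\<lambda>x. log_mean x / (1 + real m * x))"
  have "(\<lambda>n. P_factor m (Suc n)) has_prod exp (real m * I)"
    unfolding I_def by (rule has_prod_P_factor)
  moreover have "gen_euler_gamma (- of_nat m) = complex_of_real (ln (1 + real m) / real m - I)"
    using gen_euler_gamma_neg_real[of "real m"] assms unfolding I_def by simp
  moreover have "1 / real m * ln ((real m + 1) / exp (real m * I)) = ln (1 + real m) / real m - I"
    using assms by (simp add: ln_div field_simps)
  ultimately show ?thesis
    by (simp add: has_prod_iff)
qed

end
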